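(* Let $\gamma>0$ and, for $n\in\mathbb{N}$, let $D_n=\operatorname{diag}(1,2,\dots,n)\in\mathbb{R}^{n\times n}$ and \[ \mathcal{W}_n=\begin{pmatrix} 0 & D_n & 0\\ -D_n & 0 & \gamma D_n\\ 0 & -\gamma D_n & -D_n^2\end{pmatrix}\in\mathbb{R}^{3n\times 3n}, \] regarded as an operator on $\mathbb{C}^{3n}$ with the Euclidean inner product. Then for every $n\in\mathbb{N}$ one has $i\mathbb{R}\subset\rho(\mathcal{W}_n)$ (the resolvent set), and $\sup_{n\in\mathbb{N}}\|\mathcal{W}_n^{-1}\|<\infty$.
   Context: $\mathcal{W}_n$ is the matrix obtained in the paper from a modal approximation of the weakly coupled thermoelastic system under Dirichlet (displacement)–Neumann (temperature) boundary conditions, using the basis $\sqrt{2/\pi}\,\frac1j\sin jx$, $\sqrt{2/\pi}\sin jx$, $\sqrt{2/\pi}\cos jx$, $j=1,\dots,n$. *)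

theory Defs
  imports Complex_Main "Jordan_Normal_Form.Matrix"
begin

definition D_mat :: "nat \<Rightarrow> complex mat" where
  "D_mat n = mat n n (\<lambda>(i,j). if i = j then of_nat (i + 1) else 0)"

definition W_mat :: "real \<Rightarrow> nat \<Rightarrow> complex mat" where
  "W_mat \<gamma> n = mat (3*n) (3*n) (\<lambda>(i,j).
     let bi = i div n; bj = j div n; d = (D_mat n) $$ (i mod n, j mod n);
         d2 = (D_mat n * D_mat n) $$ (i mod n, j mod n) in
     if bi = 0 \<and> bj = 1 then d
     else if bi = 1 \<and> bj = 0 then - d
     else if bi = 1 \<and> bj = 2 then complex_of_real \<gamma> * d
     else if bi = 2 \<and> bj = 1 then - (complex_of_real \<gamma> * d)
     else if bi = 2 \<and> bj = 2 then - d2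
     else 0)"

definition vec_norm :: "complex vec \<Rightarrow> real" where
  "vec_norm v = sqrt (\<Sum>i<dim_vec v. (cmod (v $ i))\<^sup>2)"

definition op_norm :: "complex mat \<Rightarrow> real" where
  "op_norm A = Sup {vec_norm (A *\<^sub>v x) | x. x \<in> carrier_vec (dim_col A) \<and> vec_norm x \<le> 1}"

definition mat_inv :: "complex mat \<Rightarrow> complex mat" where
  "mat_inv A = (SOME B. B \<in> carrier_mat (dim_row A) (dim_row A) \<and>
      A * B = 1\<^sub>m (dim_row A) \<and> B * A = 1\<^sub>m (dim_row A))"

definition resolvent_set :: "complex mat \<Rightarrow> complex set" where
  "resolvent_set A = {z. invertible_mat (z \<cdot>\<^sub>m 1\<^sub>m (dim_row A) - A)}"

end

theory Submission
  imports Defs "Jordan_Normal_Form.Char_Poly"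
begin

(* W_n decouples into n independent 3x3 blocks: mode k = p + 1 acts on the coordinates
   (x_p, x_(n+p), x_(2n+p)) by B_k = [[0, k, 0], [-k, 0, \<gamma> k], [0, -\<gamma> k, -k^2]].
   Apart from the damping entry -k^2, B_k is skew-symmetric, so Re <B_k x, x> = -k^2 |x_3|^2;
   hence an eigenvector for an imaginary eigenvalue has x_3 = 0, and the coupling \<gamma> \<noteq> 0
   then forces x_2 = x_1 = 0. Solving B_k x = y explicitly, x_2 = y_1 / k,
   x_3 = -(y_3 + \<gamma> y_1) / k^2, x_1 = \<gamma> x_3 - y_2 / k, gives |x| \<le> 3 (1 + \<gamma>)^2 |y|
   for every k \<ge> 1, uniformly in n. *)

lemma smult_one_minus_mult_vec:
  fixes A :: "'a::comm_ring_1 mat"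
  assumes "A \<in> carrier_mat n n" and "v \<in> carrier_vec n"
  shows "(z \<cdot>\<^sub>m 1\<^sub>m n - A) *\<^sub>v v = z \<cdot>\<^sub>v v - A *\<^sub>v v"
proof (rule eq_vecI)
  fix i assume "i < dim_vec (z \<cdot>\<^sub>v v - A *\<^sub>v v)"
  then have i: "i < n" using assms by simp
  have "(\<Sum>j = 0..<n. (z * (if i = j then 1 else 0) - A $$ (i, j)) * v $ j)
      = (\<Sum>j = 0..<n. (if i = j then z * v $ j else 0) - A $$ (i, j) * v $ j)"
    by (intro sum.cong) (auto simp: left_diff_distrib)
  then show "((z \<cdot>\<^sub>m 1\<^sub>m n - A) *\<^sub>v v) $ i = (z \<cdot>\<^sub>v v - A *\<^sub>v v) $ i"
    using assms i by (simp add: scalar_prod_def sum_subtractf)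
qed (use assms in simp)

lemma invertible_mat_if_trivial_kernel:
  fixes A :: "'a::field mat"
  assumes A: "A \<in> carrier_mat n n"
    and kernel: "\<And>v. v \<in> carrier_vec n \<Longrightarrow> A *\<^sub>v v = 0\<^sub>v n \<Longrightarrow> v = 0\<^sub>v n"
  shows "invertible_mat A"
proof -
  have "det A \<noteq> 0"
    using det_0_iff_vec_prod_zero_field[OF A] kernel by blast
  from det_non_zero_imp_unit[OF A this, of "()"] A show ?thesis
    by (auto simp: Units_def ring_mat_def invertible_mat_def inverts_mat_def)
qed

lemma invertible_if_not_eigenvalue_0:
  fixes A :: "'a::field mat"
  assumes A: "A \<in> carrier_mat n n" and not_eigen: "\<not> eigenvalue A 0"
  shows "invertible_mat A"
  using A
proof (rule invertible_mat_if_trivial_kernel)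
  fix v assume v: "v \<in> carrier_vec n" and "A *\<^sub>v v = 0\<^sub>v n"
  moreover have "0 \<cdot>\<^sub>v v = 0\<^sub>v n" using v by (intro eq_vecI) auto
  ultimately show "v = 0\<^sub>v n"
    using A not_eigen by (auto simp: eigenvalue_def eigenvector_def)
qed

lemma invertible_shift_if_not_eigenvalue:
  fixes A :: "'a::field mat"
  assumes A: "A \<in> carrier_mat n n" and not_eigen: "\<not> eigenvalue A z"
  shows "invertible_mat (z \<cdot>\<^sub>m 1\<^sub>m n - A)"
proof (rule invertible_mat_if_trivial_kernel)
  show "z \<cdot>\<^sub>m 1\<^sub>m n - A \<in> carrier_mat n n" using A by (rule minus_carrier_mat)
  fix v assume v: "v \<in> carrier_vec n" and kernel: "(z \<cdot>\<^sub>m 1\<^sub>m n - A) *\<^sub>v v = 0\<^sub>v n"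
  have "A *\<^sub>v v = z \<cdot>\<^sub>v v"
  proof (rule eq_vecI)
    fix i assume "i < dim_vec (z \<cdot>\<^sub>v v)"
    then have i: "i < n" using v by simp
    then have "(z \<cdot>\<^sub>v v - A *\<^sub>v v) $ i = 0"
      using kernel smult_one_minus_mult_vec[OF A v] by simp
    then show "(A *\<^sub>v v) $ i = (z \<cdot>\<^sub>v v) $ i" using A v i by simp
  qed (use A v in simp)
  then show "v = 0\<^sub>v n"
    using A v not_eigen by (auto simp: eigenvalue_def eigenvector_def)
qed

lemma
  assumes "A \<in> carrier_mat n n" and "invertible_mat A"
  shows mat_inv_carrier: "mat_inv A \<in> carrier_mat n n"
    and mat_inv_right: "A * mat_inv A = 1\<^sub>m n"
proof -
  obtain B where "A * B = 1\<^sub>m n" and "B * A = 1\<^sub>m (dim_row B)"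
    using assms by (auto simp: invertible_mat_def inverts_mat_def)
  moreover from this have "B \<in> carrier_mat n n"
    using assms(1) by (metis carrier_matD carrier_matI index_mult_mat(2,3) index_one_mat(2,3))
  ultimately have "\<exists>B. B \<in> carrier_mat n n \<and> A * B = 1\<^sub>m n \<and> B * A = 1\<^sub>m n"
    by auto
  from someI_ex[OF this] have "mat_inv A \<in> carrier_mat n n \<and> A * mat_inv A = 1\<^sub>m n"
    unfolding mat_inv_def using assms(1) by auto
  then show "mat_inv A \<in> carrier_mat n n" and "A * mat_inv A = 1\<^sub>m n" by auto
qed

lemma op_norm_le:
  assumes A: "A \<in> carrier_mat m n" and C: "0 \<le> C"
    and bound: "\<And>x. x \<in> carrier_vec n \<Longrightarrow> vec_norm (A *\<^sub>v x) \<le> C * vec_norm x"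
  shows "op_norm A \<le> C"
  unfolding op_norm_def
proof (rule cSup_least)
  show "{vec_norm (A *\<^sub>v x) |x. x \<in> carrier_vec (dim_col A) \<and> vec_norm x \<le> 1} \<noteq> {}"
    using zero_carrier_vec[of "dim_col A"] by (fastforce simp: vec_norm_def)
next
  fix r assume "r \<in> {vec_norm (A *\<^sub>v x) |x. x \<in> carrier_vec (dim_col A) \<and> vec_norm x \<le> 1}"
  then obtain x where r: "r = vec_norm (A *\<^sub>v x)" and x: "x \<in> carrier_vec n" "vec_norm x \<le> 1"
    using A by auto
  have "r \<le> C * vec_norm x" using r bound[OF x(1)] by simp
  also have "\<dots> \<le> C" using C x(2) by (simp add: mult_left_le)
  finally show "r \<le> C" .
qed

lemma sum_lessThan_three_blocks:
  fixes f :: "nat \<Rightarrow> 'a::comm_monoid_add"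
  shows "(\<Sum>i<3*n. f i) = (\<Sum>p<n. f p + f (n + p) + f (2*n + p))"
proof -
  have "(\<Sum>i<3*n. f i) = (\<Sum>i<n. f i) + (\<Sum>i\<in>{n..<2*n}. f i) + (\<Sum>i\<in>{2*n..<3*n}. f i)"
    by (simp add: lessThan_atLeast0 sum.atLeastLessThan_concat)
  also have "(\<Sum>i\<in>{n..<2*n}. f i) = (\<Sum>p<n. f (n + p))"
    using sum.shift_bounds_nat_ivl[of f 0 n n] by (simp add: lessThan_atLeast0 add.commute mult_2)
  also have "(\<Sum>i\<in>{2*n..<3*n}. f i) = (\<Sum>p<n. f (2*n + p))"
    using sum.shift_bounds_nat_ivl[of f 0 "2*n" n] by (simp add: lessThan_atLeast0 add.commute)
  finally show ?thesis by (simp add: sum.distrib)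
qed

lemma less_three_mult_cases:
  assumes "i < 3 * (n::nat)"
  obtains p where "p < n" and "i = p \<or> i = n + p \<or> i = 2*n + p"
proof -
  consider "i < n" | "n \<le> i" "i < 2*n" | "2*n \<le> i" by linarith
  then show ?thesis
  proof cases
    case 1 then show ?thesis using that by blast
  next
    case 2 then show ?thesis using that[of "i - n"] by auto
  next
    case 3 then show ?thesis using that[of "i - 2*n"] assms by auto
  qed
qed

lemma W_mat_carrier: "W_mat \<gamma> n \<in> carrier_mat (3*n) (3*n)"
  by (simp add: W_mat_def)

lemma W_mat_entries:
  assumes p: "p < n" and q: "q < n"
  shows "W_mat \<gamma> n $$ (p, q) = 0"
    and "W_mat \<gamma> n $$ (p, n + q) = (if p = q then of_nat (p + 1) else 0)"
    and "W_mat \<gamma> n $$ (p, 2*n + q) = 0"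
    and "W_mat \<gamma> n $$ (n + p, q) = (if p = q then - of_nat (p + 1) else 0)"
    and "W_mat \<gamma> n $$ (n + p, n + q) = 0"
    and "W_mat \<gamma> n $$ (n + p, 2*n + q) = (if p = q then of_real \<gamma> * of_nat (p + 1) else 0)"
    and "W_mat \<gamma> n $$ (2*n + p, q) = 0"
    and "W_mat \<gamma> n $$ (2*n + p, n + q) = (if p = q then - (of_real \<gamma> * of_nat (p + 1)) else 0)"
    and "W_mat \<gamma> n $$ (2*n + p, 2*n + q) = (if p = q then - ((of_nat (p + 1))^2) else 0)"
proof -
  have D: "D_mat n $$ (p, q) = (if p = q then of_nat (p + 1) else 0)"
    using p q by (simp add: D_mat_def)
  have DD: "(D_mat n * D_mat n) $$ (p, q) = (if p = q then (of_nat (p + 1))^2 else 0)"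
    using p q by (auto simp: D_mat_def scalar_prod_def power2_eq_square if_distrib[of "\<lambda>x. x * _"] cong: if_cong)
  have block_index: "r div n = 0" "r mod n = r" "(n + r) div n = 1" "(n + r) mod n = r"
      "(2*n + r) div n = 2" "(2*n + r) mod n = r" if "r < n" for r
    using that by auto
  note index = block_index[OF p] block_index[OF q]
  show "W_mat \<gamma> n $$ (p, q) = 0"
    and "W_mat \<gamma> n $$ (p, n + q) = (if p = q then of_nat (p + 1) else 0)"
    and "W_mat \<gamma> n $$ (p, 2*n + q) = 0"
    and "W_mat \<gamma> n $$ (n + p, q) = (if p = q then - of_nat (p + 1) else 0)"
    and "W_mat \<gamma> n $$ (n + p, n + q) = 0"
    and "W_mat \<gamma> n $$ (n + p, 2*n + q) = (if p = q then of_real \<gamma> * of_nat (p + 1) else 0)"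
    and "W_mat \<gamma> n $$ (2*n + p, q) = 0"
    and "W_mat \<gamma> n $$ (2*n + p, n + q) = (if p = q then - (of_real \<gamma> * of_nat (p + 1)) else 0)"
    and "W_mat \<gamma> n $$ (2*n + p, 2*n + q) = (if p = q then - ((of_nat (p + 1))^2) else 0)"
    using p q by (simp_all add: W_mat_def Let_def index D DD)
qed

lemma W_mat_mult_vec:
  assumes x: "x \<in> carrier_vec (3*n)" and p: "p < n"
  shows "(W_mat \<gamma> n *\<^sub>v x) $ p = of_nat (p + 1) * x $ (n + p)"
    and "(W_mat \<gamma> n *\<^sub>v x) $ (n + p) = - (of_nat (p + 1) * x $ p) + of_real \<gamma> * of_nat (p + 1) * x $ (2*n + p)"
    and "(W_mat \<gamma> n *\<^sub>v x) $ (2*n + p) = - (of_real \<gamma> * of_nat (p + 1) * x $ (n + p)) - (of_nat (p + 1))^2 * x $ (2*n + p)"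
proof -
  have row: "(W_mat \<gamma> n *\<^sub>v x) $ i = (\<Sum>q<n. W_mat \<gamma> n $$ (i, q) * x $ q
      + W_mat \<gamma> n $$ (i, n + q) * x $ (n + q) + W_mat \<gamma> n $$ (i, 2*n + q) * x $ (2*n + q))"
    if "i < 3*n" for i
  proof -
    have "(W_mat \<gamma> n *\<^sub>v x) $ i = (\<Sum>j<3*n. W_mat \<gamma> n $$ (i, j) * x $ j)"
      using x that by (simp add: W_mat_def scalar_prod_def lessThan_atLeast0)
    then show ?thesis by (simp only: sum_lessThan_three_blocks)
  qed
  have "p < 3*n" "n + p < 3*n" "2*n + p < 3*n" using p by auto
  then show "(W_mat \<gamma> n *\<^sub>v x) $ p = of_nat (p + 1) * x $ (n + p)"
    and "(W_mat \<gamma> n *\<^sub>v x) $ (n + p) = - (of_nat (p + 1) * x $ p) + of_real \<gamma> * of_nat (p + 1) * x $ (2*n + p)"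
    and "(W_mat \<gamma> n *\<^sub>v x) $ (2*n + p) = - (of_real \<gamma> * of_nat (p + 1) * x $ (n + p)) - (of_nat (p + 1))^2 * x $ (2*n + p)"
    using p by (simp_all add: row W_mat_entries if_distrib[of "\<lambda>y. y * _"] sum.distrib cong: if_cong)
      (simp add: algebra_simps)
qed

lemma mode_no_imaginary_eigenvalue:
  fixes a b c :: complex and k g \<omega> :: real
  assumes k: "k \<noteq> 0" and g: "g \<noteq> 0"
    and eq1: "\<i> * of_real \<omega> * a = of_real k * b"
    and eq2: "\<i> * of_real \<omega> * b = - (of_real k * a) + of_real g * of_real k * c"
    and eq3: "\<i> * of_real \<omega> * c = - (of_real g * of_real k * b) - (of_real k)^2 * c"
  shows "a = 0 \<and> b = 0 \<and> c = 0"
proof -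
  have "0 = Re (cnj a * (\<i> * of_real \<omega> * a) + cnj b * (\<i> * of_real \<omega> * b) + cnj c * (\<i> * of_real \<omega> * c))"
    by (simp add: algebra_simps)
  also have "\<dots> = Re (cnj a * (of_real k * b) + cnj b * (- (of_real k * a) + of_real g * of_real k * c)
      + cnj c * (- (of_real g * of_real k * b) - (of_real k)^2 * c))"
    by (simp only: eq1 eq2 eq3)
  also have "\<dots> = - (k^2 * (cmod c)^2)"
    using cmod_power2[of c] by (simp add: algebra_simps power2_eq_square)
  finally have c: "c = 0" using k by simp
  with eq3 have b: "b = 0" using k g by simp
  with eq2 c have "a = 0" using k by simp
  with b c show ?thesis by simp
qed

lemma mode_solution_norms:
  fixes a b c u v w :: complex and k g :: real
  assumes k: "1 \<le> k" and g: "0 \<le> g"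
    and u: "u = of_real k * b"
    and v: "v = - (of_real k * a) + of_real g * of_real k * c"
    and w: "w = - (of_real g * of_real k * b) - (of_real k)^2 * c"
  shows "cmod b \<le> cmod u" and "cmod c \<le> cmod w + g * cmod u" and "cmod a \<le> g * cmod c + cmod v"
proof -
  have shrink: "cmod (z / of_real k) \<le> cmod z" for z
    using k by (simp add: norm_divide divide_le_eq mult_le_cancel_left1)
  have "b = u / of_real k" using u k by simp
  then show "cmod b \<le> cmod u" using shrink by simp
  have "(of_real k)^2 * c = - (w + of_real g * u)" unfolding u w by (simp add: algebra_simps)
  then have "k^2 * cmod c = cmod (w + of_real g * u)"
    by (metis norm_minus_cancel norm_mult norm_of_real norm_power power2_abs)
  moreover have "cmod c \<le> k^2 * cmod c" using k by (simp add: mult_le_cancel_right1 one_le_power)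
  ultimately have "cmod c \<le> cmod (w + of_real g * u)" by simp
  also have "\<dots> \<le> cmod w + g * cmod u"
    using g by (metis abs_of_nonneg norm_mult norm_of_real norm_triangle_ineq)
  finally show "cmod c \<le> cmod w + g * cmod u" .
  have "a = of_real g * c - v / of_real k" using v k by (simp add: field_simps)
  then have "cmod a \<le> g * cmod c + cmod (v / of_real k)"
    using g by (metis abs_of_nonneg norm_mult norm_of_real norm_triangle_ineq4)
  then show "cmod a \<le> g * cmod c + cmod v" using shrink[of v] by linarith
qed

lemma mode_inverse_bound:
  fixes a b c u v w :: complex and k g :: real
  assumes k: "1 \<le> k" and g: "0 \<le> g"
    and u: "u = of_real k * b"
    and v: "v = - (of_real k * a) + of_real g * of_real k * c"
    and w: "w = - (of_real g * of_real k * b) - (of_real k)^2 * c"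
  shows "(cmod a)^2 + (cmod b)^2 + (cmod c)^2 \<le> 9 * (1 + g)^4 * ((cmod u)^2 + (cmod v)^2 + (cmod w)^2)"
proof -
  note solution = mode_solution_norms[OF assms]
  define M where "M = cmod u + cmod v + cmod w"
  define K where "K = (1 + g)^2"
  have M: "0 \<le> M" "cmod u \<le> M" "cmod v \<le> M" "cmod w \<le> M"
    unfolding M_def by (simp_all add: add_increasing add_increasing2)
  have "1 + g \<le> K" using g by (simp add: K_def power2_eq_square algebra_simps)
  then have K: "M \<le> K * M" "(1 + g) * M \<le> K * M"
    using g M(1) mult_right_mono[of 1 K M] mult_right_mono[of "1 + g" K M] by simp_all
  have hb: "cmod b \<le> K * M" using solution(1) M K by linarith
  have hc': "cmod c \<le> (1 + g) * M"
    using solution(2) M mult_left_mono[OF M(2) g] by (simp add: algebra_simps)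
  then have hc: "cmod c \<le> K * M" using K by linarith
  have "cmod a \<le> g * ((1 + g) * M) + M" using solution(3) add_mono[OF mult_left_mono[OF hc' g] M(3)] by linarith
  also have "\<dots> \<le> K * M" using g M by (simp add: K_def power2_eq_square algebra_simps)
  finally have ha: "cmod a \<le> K * M" .
  have "(cmod a)^2 + (cmod b)^2 + (cmod c)^2 \<le> 3 * K^2 * M^2"
    using power_mono[OF ha, of 2] power_mono[OF hb, of 2] power_mono[OF hc, of 2]
    by (simp add: power_mult_distrib)
  also have "\<dots> \<le> 9 * (1 + g)^4 * ((cmod u)^2 + (cmod v)^2 + (cmod w)^2)"
  proof -
    have "M^2 \<le> 3 * ((cmod u)^2 + (cmod v)^2 + (cmod w)^2)"
      using sum_squares_ge_zero[of "cmod u - cmod v" "cmod v - cmod w"] zero_le_power2[of "cmod u - cmod w"]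
      unfolding M_def by (simp add: power2_eq_square algebra_simps)
    then have "3 * K^2 * M^2 \<le> 3 * K^2 * (3 * ((cmod u)^2 + (cmod v)^2 + (cmod w)^2))"
      by (simp add: mult_left_mono)
    then show ?thesis by (simp add: K_def algebra_simps flip: power_mult)
  qed
  finally show ?thesis .
qed

lemma W_mat_no_imaginary_eigenvalue:
  assumes \<gamma>: "\<gamma> \<noteq> 0"
  shows "\<not> eigenvalue (W_mat \<gamma> n) (\<i> * of_real \<omega>)"
proof
  assume "eigenvalue (W_mat \<gamma> n) (\<i> * of_real \<omega>)"
  then obtain v where v: "v \<in> carrier_vec (3*n)" and nonzero: "v \<noteq> 0\<^sub>v (3*n)"
    and eigen: "W_mat \<gamma> n *\<^sub>v v = (\<i> * of_real \<omega>) \<cdot>\<^sub>v v"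
    using W_mat_carrier[of \<gamma> n] by (auto simp: eigenvalue_def eigenvector_def)
  have eigen_at: "(W_mat \<gamma> n *\<^sub>v v) $ i = \<i> * of_real \<omega> * v $ i" if "i < 3*n" for i
    using eigen v that by simp
  have modes_eq_0: "v $ p = 0 \<and> v $ (n + p) = 0 \<and> v $ (2*n + p) = 0" if p: "p < n" for p
    using \<gamma> W_mat_mult_vec[OF v p] eigen_at[of p] eigen_at[of "n + p"] eigen_at[of "2*n + p"] p
    by (intro mode_no_imaginary_eigenvalue[of "real (p + 1)" \<gamma> \<omega>]) simp_all
  have "v = 0\<^sub>v (3*n)"
  proof (rule eq_vecI)
    fix i assume "i < dim_vec (0\<^sub>v (3*n))"
    then obtain p where "p < n" "i = p \<or> i = n + p \<or> i = 2*n + p"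
      using less_three_mult_cases by auto
    with modes_eq_0 show "v $ i = 0\<^sub>v (3*n) $ i" by auto
  qed (use v in simp)
  with nonzero show False ..
qed

lemma W_mat_inverse_bound:
  assumes \<gamma>: "0 \<le> \<gamma>" and y: "y \<in> carrier_vec (3*n)"
  shows "vec_norm y \<le> 3 * (1 + \<gamma>)^2 * vec_norm (W_mat \<gamma> n *\<^sub>v y)"
proof -
  let ?x = "W_mat \<gamma> n *\<^sub>v y"
  let ?C = "3 * (1 + \<gamma>)^2"
  have "(\<Sum>i<3*n. (cmod (y $ i))^2)
      = (\<Sum>p<n. (cmod (y $ p))^2 + (cmod (y $ (n + p)))^2 + (cmod (y $ (2*n + p)))^2)"
    by (rule sum_lessThan_three_blocks)
  also have "\<dots> \<le> (\<Sum>p<n. ?C^2 * ((cmod (?x $ p))^2 + (cmod (?x $ (n + p)))^2 + (cmod (?x $ (2*n + p)))^2))"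
  proof (rule sum_mono)
    fix p assume "p \<in> {..<n}"
    then have p: "p < n" by simp
    have "(cmod (y $ p))^2 + (cmod (y $ (n + p)))^2 + (cmod (y $ (2*n + p)))^2
        \<le> 9 * (1 + \<gamma>)^4 * ((cmod (?x $ p))^2 + (cmod (?x $ (n + p)))^2 + (cmod (?x $ (2*n + p)))^2)"
      by (rule mode_inverse_bound[where k = "real (p + 1)"]) (use \<gamma> W_mat_mult_vec[OF y p] in simp_all)
    then show "(cmod (y $ p))^2 + (cmod (y $ (n + p)))^2 + (cmod (y $ (2*n + p)))^2
        \<le> ?C^2 * ((cmod (?x $ p))^2 + (cmod (?x $ (n + p)))^2 + (cmod (?x $ (2*n + p)))^2)"
      by (simp add: power_mult_distrib flip: power_mult)
  qed
  also have "\<dots> = ?C^2 * (\<Sum>i<3*n. (cmod (?x $ i))^2)"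
    by (simp add: sum_lessThan_three_blocks sum_distrib_left)
  finally have "sqrt (\<Sum>i<3*n. (cmod (y $ i))^2) \<le> sqrt (?C^2 * (\<Sum>i<3*n. (cmod (?x $ i))^2))"
    by (rule real_sqrt_le_mono)
  also have "\<dots> = ?C * sqrt (\<Sum>i<3*n. (cmod (?x $ i))^2)"
    by (simp only: real_sqrt_mult real_sqrt_abs) (simp add: \<gamma>)
  finally show ?thesis
    using y W_mat_carrier[of \<gamma> n] by (simp only: vec_norm_def carrier_vecD dim_mult_mat_vec carrier_matD)
qed

theorem lemma4p7:
  fixes \<gamma> :: real
  assumes "\<gamma> > 0"
  shows "(\<forall>n. {\<i> * complex_of_real \<omega> | \<omega>. True} \<subseteq> resolvent_set (W_mat \<gamma> n))
       \<and> (\<exists>C. \<forall>n. op_norm (mat_inv (W_mat \<gamma> n)) \<le> C)"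
proof (intro conjI allI subsetI exI)
  fix n z
  assume "z \<in> {\<i> * complex_of_real \<omega> | \<omega>. True}"
  then obtain \<omega> where "z = \<i> * complex_of_real \<omega>" by blast
  then have "invertible_mat (z \<cdot>\<^sub>m 1\<^sub>m (3*n) - W_mat \<gamma> n)"
    using assms by (simp add: invertible_shift_if_not_eigenvalue W_mat_carrier W_mat_no_imaginary_eigenvalue)
  then show "z \<in> resolvent_set (W_mat \<gamma> n)"
    using W_mat_carrier[of \<gamma> n] by (simp add: resolvent_set_def)
next
  fix n
  let ?W = "W_mat \<gamma> n" and ?C = "3 * (1 + \<gamma>)^2"
  have "invertible_mat ?W"
    using W_mat_no_imaginary_eigenvalue[of \<gamma> n 0] assms
    by (intro invertible_if_not_eigenvalue_0[OF W_mat_carrier]) simp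
  note inv = mat_inv_carrier[OF W_mat_carrier this] mat_inv_right[OF W_mat_carrier this]
  show "op_norm (mat_inv ?W) \<le> ?C"
  proof (rule op_norm_le[OF inv(1)])
    fix x :: "complex vec" assume x: "x \<in> carrier_vec (3*n)"
    have "?W *\<^sub>v (mat_inv ?W *\<^sub>v x) = x"
      using assoc_mult_mat_vec[OF W_mat_carrier[of \<gamma> n] inv(1) x] inv(2) x by simp
    then show "vec_norm (mat_inv ?W *\<^sub>v x) \<le> ?C * vec_norm x"
      using W_mat_inverse_bound[of \<gamma> "mat_inv ?W *\<^sub>v x" n] inv(1) x assms by simp
  qed simp
qed

end
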